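(* Let $X$ be a complete orthomodular lattice. Then the unital involutive quantale $\mathrm{Lin}(X)$ (multiplication = composition, unit = identity map, pointwise joins, involution $s\mapsto s^\star$), equipped with the endomap $[-]\colon\mathrm{Lin}(X)\to\mathrm{Lin}(X)$ given by $[s]=\pi_{s^\star(1)^\perp}$, is a Foulis quantale. In particular $[\mathrm{id}_X]$ is the zero map, and for $s,t\in\mathrm{Lin}(X)$ we have $s\circ t=0$ iff $t=[s]\circ r$ for some $r\in\mathrm{Lin}(X)$.
   Context: An ortholattice is a bounded lattice with an involutive order-reversing map $x\mapsto x^\perp$ with $x\wedge x^\perp=0$; it is orthomodular if $x\le y$ implies $y=x\vee(x^\perp\wedge y)$. Write $x\perp y$ iff $x\le y^\perp$. A map $f\colon X\to X$ on a complete orthomodular lattice is linear if there is $h$ with $f(x)\perp y\iff x\perp h(y)$ for all $x,y$; such $h$ is unique, denoted $f^\star$; $\mathrm{Lin}(X)$ is the set of linear maps $X\to X$. For $a\in X$ the Sasaki projection is $\pi_a(y)=a\wedge(a^\perp\vee y)$. A quantale is a complete lattice with associative multiplication distributing over arbitrary joins on both sides; unital if it has a two-sided unit $e$; involutive if equipped with a join-preserving semigroup involution $*$. A Foulis quantale is a unital involutive quantale $Q$ with an endomap $[-]\colon Q\to Q$ such that: (a) $[s]\cdot[s]=[s]=[s]^*$ for all $s$; (b) $[e]=0$; (c) for all $s,x\in Q$: $s\cdot x=0$ iff there exists $y\in Q$ with $x=[s]\cdot y$. *)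

theory Defs
  imports Main
begin

text \<open>A complete orthomodular lattice: the underlying complete lattice is the type
  'a (class complete_lattice, giving bot = 0 and top = 1), together with an
  orthocomplementation oc.\<close>

definition ortholattice :: "('a::complete_lattice \<Rightarrow> 'a) \<Rightarrow> bool" where
  "ortholattice oc \<longleftrightarrow>
     (\<forall>x. oc (oc x) = x) \<and>
     (\<forall>x y. x \<le> y \<longrightarrow> oc y \<le> oc x) \<and>
     (\<forall>x. inf x (oc x) = bot)"

definition complete_oml :: "('a::complete_lattice \<Rightarrow> 'a) \<Rightarrow> bool" where
  "complete_oml oc \<longleftrightarrow> ortholattice oc \<and>
     (\<forall>x y. x \<le> y \<longrightarrow> y = sup x (inf (oc x) y))"

definition orth :: "('a::complete_lattice \<Rightarrow> 'a) \<Rightarrow> 'a \<Rightarrow> 'a \<Rightarrow> bool" where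
  "orth oc x y \<longleftrightarrow> x \<le> oc y"

definition is_adjoint :: "('a::complete_lattice \<Rightarrow> 'a) \<Rightarrow> ('a \<Rightarrow> 'a) \<Rightarrow> ('a \<Rightarrow> 'a) \<Rightarrow> bool" where
  "is_adjoint oc f h \<longleftrightarrow> (\<forall>x y. orth oc (f x) y \<longleftrightarrow> orth oc x (h y))"

definition Lin :: "('a::complete_lattice \<Rightarrow> 'a) \<Rightarrow> ('a \<Rightarrow> 'a) set" where
  "Lin oc = {f. \<exists>h. is_adjoint oc f h}"

definition lstar :: "('a::complete_lattice \<Rightarrow> 'a) \<Rightarrow> ('a \<Rightarrow> 'a) \<Rightarrow> ('a \<Rightarrow> 'a)" where
  "lstar oc f = (THE h. is_adjoint oc f h)"

definition sasaki :: "('a::complete_lattice \<Rightarrow> 'a) \<Rightarrow> 'a \<Rightarrow> 'a \<Rightarrow> 'a" where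
  "sasaki oc a y = inf a (sup (oc a) y)"

definition foulis_br :: "('a::complete_lattice \<Rightarrow> 'a) \<Rightarrow> ('a \<Rightarrow> 'a) \<Rightarrow> ('a \<Rightarrow> 'a)" where
  "foulis_br oc s = sasaki oc (oc (lstar oc s top))"

definition pw_le :: "('a::complete_lattice \<Rightarrow> 'a) \<Rightarrow> ('a \<Rightarrow> 'a) \<Rightarrow> bool" where
  "pw_le f g \<longleftrightarrow> (\<forall>x. f x \<le> g x)"

definition is_lub :: "('q \<Rightarrow> 'q \<Rightarrow> bool) \<Rightarrow> 'q set \<Rightarrow> 'q set \<Rightarrow> 'q \<Rightarrow> bool" where
  "is_lub le Q S s \<longleftrightarrow> s \<in> Q \<and> (\<forall>a\<in>S. le a s) \<and> (\<forall>b\<in>Q. (\<forall>a\<in>S. le a b) \<longrightarrow> le s b)"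

definition complete_lattice_on :: "'q set \<Rightarrow> ('q \<Rightarrow> 'q \<Rightarrow> bool) \<Rightarrow> bool" where
  "complete_lattice_on Q le \<longleftrightarrow>
     (\<forall>a\<in>Q. le a a) \<and>
     (\<forall>a\<in>Q. \<forall>b\<in>Q. le a b \<and> le b a \<longrightarrow> a = b) \<and>
     (\<forall>a\<in>Q. \<forall>b\<in>Q. \<forall>c\<in>Q. le a b \<and> le b c \<longrightarrow> le a c) \<and>
     (\<forall>S\<subseteq>Q. \<exists>s. is_lub le Q S s)"

definition quantale_on :: "'q set \<Rightarrow> ('q \<Rightarrow> 'q \<Rightarrow> bool) \<Rightarrow> ('q \<Rightarrow> 'q \<Rightarrow> 'q) \<Rightarrow> bool" where
  "quantale_on Q le m \<longleftrightarrow>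
     complete_lattice_on Q le \<and>
     (\<forall>a\<in>Q. \<forall>b\<in>Q. m a b \<in> Q) \<and>
     (\<forall>a\<in>Q. \<forall>b\<in>Q. \<forall>c\<in>Q. m (m a b) c = m a (m b c)) \<and>
     (\<forall>a\<in>Q. \<forall>S\<subseteq>Q. \<forall>s. is_lub le Q S s \<longrightarrow>
        is_lub le Q ((\<lambda>x. m a x) ` S) (m a s) \<and> is_lub le Q ((\<lambda>x. m x a) ` S) (m s a))"

definition unital_involutive_quantale_on ::
  "'q set \<Rightarrow> ('q \<Rightarrow> 'q \<Rightarrow> bool) \<Rightarrow> ('q \<Rightarrow> 'q \<Rightarrow> 'q) \<Rightarrow> 'q \<Rightarrow> ('q \<Rightarrow> 'q) \<Rightarrow> bool" where
  "unital_involutive_quantale_on Q le m e iv \<longleftrightarrow>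
     quantale_on Q le m \<and>
     e \<in> Q \<and> (\<forall>a\<in>Q. m e a = a \<and> m a e = a) \<and>
     (\<forall>a\<in>Q. iv a \<in> Q) \<and>
     (\<forall>a\<in>Q. iv (iv a) = a) \<and>
     (\<forall>a\<in>Q. \<forall>b\<in>Q. iv (m a b) = m (iv b) (iv a)) \<and>
     (\<forall>S\<subseteq>Q. \<forall>s. is_lub le Q S s \<longrightarrow> is_lub le Q (iv ` S) (iv s))"

text \<open>Zero of the quantale = least element = join of the empty set.\<close>
definition foulis_quantale_on ::
  "'q set \<Rightarrow> ('q \<Rightarrow> 'q \<Rightarrow> bool) \<Rightarrow> ('q \<Rightarrow> 'q \<Rightarrow> 'q) \<Rightarrow> 'q \<Rightarrow> ('q \<Rightarrow> 'q) \<Rightarrow> ('q \<Rightarrow> 'q) \<Rightarrow> bool" where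
  "foulis_quantale_on Q le m e iv br \<longleftrightarrow>
     unital_involutive_quantale_on Q le m e iv \<and>
     (\<forall>s\<in>Q. br s \<in> Q) \<and>
     (\<forall>s\<in>Q. m (br s) (br s) = br s \<and> iv (br s) = br s) \<and>
     is_lub le Q {} (br e) \<and>
     (\<forall>s\<in>Q. \<forall>x\<in>Q. is_lub le Q {} (m s x) \<longleftrightarrow> (\<exists>y\<in>Q. x = m (br s) y))"

end

theory Submission
  imports Defs
begin

text \<open>Joins of linear maps are pointwise, and the adjoint of a pointwise join is the
  pointwise join of the adjoints, so \<open>Lin(X)\<close> is a complete sublattice of \<open>X \<Rightarrow> X\<close> closed
  under composition and \<open>\<star>\<close>. Adjunction identifies the kernel of \<open>s\<close> with the principal
  ideal below \<open>s\<^sup>\<star>(1)\<^sup>\<perp>\<close>; orthomodularity makes the Sasaki projection onto an element \<open>a\<close> a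
  self-adjoint idempotent linear map with image exactly the ideal below \<open>a\<close>. Hence
  \<open>s \<circ> t = 0\<close> iff \<open>t\<close> lands in that ideal iff \<open>t = [s] \<circ> t\<close>.\<close>

lemma pw_le_eq_le: "pw_le = (\<le>)"
  by (auto simp: fun_eq_iff pw_le_def le_fun_def)

locale orthocomplemented =
  fixes oc :: "'a::complete_lattice \<Rightarrow> 'a"
  assumes ortholattice: "ortholattice oc"
begin

lemma oc_oc [simp]: "oc (oc x) = x"
  using ortholattice unfolding ortholattice_def by blast

lemma oc_antimono: "x \<le> y \<Longrightarrow> oc y \<le> oc x"
  using ortholattice unfolding ortholattice_def by blast

lemma inf_oc_bot [simp]: "inf x (oc x) = bot"
  using ortholattice unfolding ortholattice_def by blast

lemma le_oc_commute: "x \<le> oc y \<longleftrightarrow> y \<le> oc x"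
  by (metis oc_antimono oc_oc)

lemma oc_sup: "oc (sup x y) = inf (oc x) (oc y)"
proof (rule antisym)
  show "oc (sup x y) \<le> inf (oc x) (oc y)"
    by (simp add: oc_antimono)
  have "sup x y \<le> oc (inf (oc x) (oc y))"
    by (metis oc_antimono inf_le1 inf_le2 oc_oc sup_least)
  then show "inf (oc x) (oc y) \<le> oc (sup x y)"
    using le_oc_commute by blast
qed

lemma oc_inf: "oc (inf x y) = sup (oc x) (oc y)"
  by (metis oc_sup oc_oc)

lemma oc_top [simp]: "oc top = bot"
  by (metis inf_oc_bot inf_top_left)

lemma oc_bot [simp]: "oc bot = top"
  by (metis oc_top oc_oc)

lemma is_adjoint_unique: "is_adjoint oc f h \<Longrightarrow> is_adjoint oc f h' \<Longrightarrow> h = h'"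
proof (rule ext)
  fix y
  assume "is_adjoint oc f h" "is_adjoint oc f h'"
  then have "x \<le> oc (h y) \<longleftrightarrow> x \<le> oc (h' y)" for x
    unfolding is_adjoint_def orth_def by blast
  then have "oc (h y) = oc (h' y)"
    by (meson antisym order_refl)
  then show "h y = h' y"
    by (metis oc_oc)
qed

lemma lstar_eqI: "is_adjoint oc f h \<Longrightarrow> lstar oc f = h"
  unfolding lstar_def using is_adjoint_unique by blast

lemma Lin_is_adjoint: "f \<in> Lin oc \<Longrightarrow> is_adjoint oc f (lstar oc f)"
  unfolding Lin_def using lstar_eqI by blast

lemma is_adjoint_sym: "is_adjoint oc f h \<Longrightarrow> is_adjoint oc h f"
  unfolding is_adjoint_def orth_def using le_oc_commute by blast

lemma lstar_in_Lin: "f \<in> Lin oc \<Longrightarrow> lstar oc f \<in> Lin oc"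
  using Lin_is_adjoint is_adjoint_sym unfolding Lin_def by blast

lemma lstar_lstar: "f \<in> Lin oc \<Longrightarrow> lstar oc (lstar oc f) = f"
  using Lin_is_adjoint is_adjoint_sym lstar_eqI by blast

lemma Lin_le_iff: "f \<in> Lin oc \<Longrightarrow> f x \<le> z \<longleftrightarrow> x \<le> oc (lstar oc f (oc z))"
  using Lin_is_adjoint[of f] unfolding is_adjoint_def orth_def by (metis oc_oc)

lemma Lin_mono: "f \<in> Lin oc \<Longrightarrow> x \<le> y \<Longrightarrow> f x \<le> f y"
  using Lin_le_iff by (meson order_refl order_trans)

lemma Lin_Sup: "f \<in> Lin oc \<Longrightarrow> f (Sup A) = (SUP a\<in>A. f a)"
proof (rule antisym)
  assume f: "f \<in> Lin oc"
  have "a \<le> oc (lstar oc f (oc (SUP a\<in>A. f a)))" if "a \<in> A" for a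
    by (metis Lin_le_iff[OF f] SUP_upper that)
  then have "Sup A \<le> oc (lstar oc f (oc (SUP a\<in>A. f a)))"
    by (rule Sup_least)
  then show "f (Sup A) \<le> (SUP a\<in>A. f a)"
    using Lin_le_iff[OF f] by blast
  show "(SUP a\<in>A. f a) \<le> f (Sup A)"
    by (rule SUP_least) (simp add: Lin_mono[OF f] Sup_upper)
qed

lemma Lin_eq_bot_iff: "f \<in> Lin oc \<Longrightarrow> f x = bot \<longleftrightarrow> x \<le> oc (lstar oc f top)"
  using Lin_le_iff[of f x bot] by (simp add: bot_unique)

lemma is_adjoint_comp:
  "is_adjoint oc f h \<Longrightarrow> is_adjoint oc g k \<Longrightarrow> is_adjoint oc (f \<circ> g) (k \<circ> h)"
  unfolding is_adjoint_def by simp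

lemma comp_in_Lin: "f \<in> Lin oc \<Longrightarrow> g \<in> Lin oc \<Longrightarrow> f \<circ> g \<in> Lin oc"
  unfolding Lin_def using is_adjoint_comp by blast

lemma lstar_comp: "f \<in> Lin oc \<Longrightarrow> g \<in> Lin oc \<Longrightarrow> lstar oc (f \<circ> g) = lstar oc g \<circ> lstar oc f"
  using is_adjoint_comp Lin_is_adjoint lstar_eqI by blast

lemma is_adjoint_id: "is_adjoint oc id id"
  unfolding is_adjoint_def by simp

lemma id_in_Lin: "id \<in> Lin oc"
  unfolding Lin_def using is_adjoint_id by blast

lemma lstar_id: "lstar oc id = id"
  using is_adjoint_id lstar_eqI by blast

lemma is_adjoint_Sup:
  assumes "S \<subseteq> Lin oc"
  shows "is_adjoint oc (Sup S) (Sup (lstar oc ` S))"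
proof -
  have "(SUP f\<in>S. f x) \<le> oc y \<longleftrightarrow> (\<forall>f\<in>S. f x \<le> oc y)" for x y
    by (simp add: SUP_le_iff)
  moreover have "(\<forall>f\<in>S. f x \<le> oc y) \<longleftrightarrow> (\<forall>f\<in>S. lstar oc f y \<le> oc x)" for x y
    using assms Lin_is_adjoint le_oc_commute unfolding is_adjoint_def orth_def by blast
  moreover have "(\<forall>f\<in>S. lstar oc f y \<le> oc x) \<longleftrightarrow> x \<le> oc (SUP f\<in>S. lstar oc f y)" for x y
    using le_oc_commute[of x "SUP f\<in>S. lstar oc f y"] by (simp add: SUP_le_iff)
  ultimately show ?thesis
    unfolding is_adjoint_def orth_def by (simp add: image_image)
qed

lemma Sup_in_Lin: "S \<subseteq> Lin oc \<Longrightarrow> Sup S \<in> Lin oc"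
  by (drule is_adjoint_Sup) (auto simp: Lin_def)

lemma lstar_Sup: "S \<subseteq> Lin oc \<Longrightarrow> lstar oc (Sup S) = Sup (lstar oc ` S)"
  by (rule lstar_eqI[OF is_adjoint_Sup])

lemma is_lub_Lin_iff: "S \<subseteq> Lin oc \<Longrightarrow> is_lub pw_le (Lin oc) S s \<longleftrightarrow> s = Sup S"
  unfolding is_lub_def pw_le_eq_le
  by (meson Sup_in_Lin Sup_least Sup_upper antisym)

lemma is_lub_empty_Lin_iff: "is_lub pw_le (Lin oc) {} f \<longleftrightarrow> f = (\<lambda>_. bot)"
  using is_lub_Lin_iff[of "{}" f] by (simp add: bot_fun_def)

lemma complete_lattice_on_Lin: "complete_lattice_on (Lin oc) pw_le"
  using is_lub_Lin_iff unfolding complete_lattice_on_def pw_le_eq_le by auto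

lemma quantale_on_Lin: "quantale_on (Lin oc) pw_le (\<circ>)"
proof -
  have comp_Sup: "a \<circ> Sup S = Sup ((\<lambda>x. a \<circ> x) ` S)" if "a \<in> Lin oc" for a S
    using Lin_Sup[OF that] by (simp add: fun_eq_iff image_image)
  have Sup_comp: "Sup S \<circ> a = Sup ((\<lambda>x. x \<circ> a) ` S)" for a :: "'a \<Rightarrow> 'a" and S
    by (simp add: fun_eq_iff image_image)
  have comp_image_in_Lin: "(\<lambda>x. a \<circ> x) ` S \<subseteq> Lin oc" "(\<lambda>x. x \<circ> a) ` S \<subseteq> Lin oc"
    if "a \<in> Lin oc" "S \<subseteq> Lin oc" for a S
    using that comp_in_Lin by blast+
  show ?thesis
    unfolding quantale_on_def
    by (simp add: complete_lattice_on_Lin comp_in_Lin is_lub_Lin_iff comp_image_in_Lin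
        comp_Sup Sup_comp comp_assoc)
qed

lemma unital_involutive_quantale_on_Lin:
  "unital_involutive_quantale_on (Lin oc) pw_le (\<circ>) id (lstar oc)"
proof -
  have "lstar oc ` S \<subseteq> Lin oc" if "S \<subseteq> Lin oc" for S
    using that lstar_in_Lin by blast
  then show ?thesis
    unfolding unital_involutive_quantale_on_def
    by (simp add: quantale_on_Lin id_in_Lin lstar_in_Lin lstar_lstar lstar_comp
        is_lub_Lin_iff lstar_Sup)
qed

end

locale orthomodular = orthocomplemented +
  assumes orthomodular: "x \<le> y \<Longrightarrow> y = sup x (inf (oc x) y)"
begin

lemma inf_sup_oc_eq:
  assumes "x \<le> y"
  shows "inf y (sup (oc y) x) = x"
proof -
  have "oc x = sup (oc y) (inf y (oc x))"
    using orthomodular[of "oc y" "oc x"] assms by (simp add: oc_antimono)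
  then have "x = oc (sup (oc y) (inf y (oc x)))"
    by (metis oc_oc)
  then show ?thesis
    by (simp add: oc_sup oc_inf)
qed

lemma sasaki_le_iff: "sasaki oc a x \<le> z \<longleftrightarrow> x \<le> sup (oc a) (inf a z)"
proof
  assume "sasaki oc a x \<le> z"
  then have "sup (oc a) (inf a (sup (oc a) x)) \<le> sup (oc a) (inf a z)"
    unfolding sasaki_def by (simp add: le_supI2)
  also have "sup (oc a) (inf a (sup (oc a) x)) = sup (oc a) x"
    using orthomodular[of "oc a" "sup (oc a) x"] by simp
  finally show "x \<le> sup (oc a) (inf a z)"
    by simp
next
  assume "x \<le> sup (oc a) (inf a z)"
  then have "sasaki oc a x \<le> inf a (sup (oc a) (inf a z))"
    unfolding sasaki_def by (simp add: le_infI2)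
  also have "\<dots> = inf a z"
    by (simp add: inf_sup_oc_eq)
  finally show "sasaki oc a x \<le> z"
    by simp
qed

lemma is_adjoint_sasaki: "is_adjoint oc (sasaki oc a) (sasaki oc a)"
proof -
  have "oc (sasaki oc a y) = sup (oc a) (inf a (oc y))" for y
    unfolding sasaki_def by (simp add: oc_inf oc_sup)
  then show ?thesis
    unfolding is_adjoint_def orth_def using sasaki_le_iff by simp
qed

lemma sasaki_le: "sasaki oc a x \<le> a"
  unfolding sasaki_def by simp

lemma sasaki_eq_self: "x \<le> a \<Longrightarrow> sasaki oc a x = x"
  unfolding sasaki_def by (rule inf_sup_oc_eq)

lemma foulis_br_in_Lin: "foulis_br oc s \<in> Lin oc"
  unfolding Lin_def foulis_br_def using is_adjoint_sasaki by blast

lemma foulis_br_idem: "foulis_br oc s \<circ> foulis_br oc s = foulis_br oc s"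
  unfolding foulis_br_def by (simp add: fun_eq_iff sasaki_eq_self sasaki_le)

lemma lstar_foulis_br: "lstar oc (foulis_br oc s) = foulis_br oc s"
  unfolding foulis_br_def by (rule lstar_eqI[OF is_adjoint_sasaki])

lemma foulis_br_id: "foulis_br oc id = (\<lambda>_. bot)"
  unfolding foulis_br_def sasaki_def by (simp add: lstar_id)

lemma comp_eq_bot_iff_foulis_br:
  assumes s: "s \<in> Lin oc" and t: "t \<in> Lin oc"
  shows "s \<circ> t = (\<lambda>_. bot) \<longleftrightarrow> (\<exists>r\<in>Lin oc. t = foulis_br oc s \<circ> r)"
proof
  assume "s \<circ> t = (\<lambda>_. bot)"
  then have "t w \<le> oc (lstar oc s top)" for w
    using Lin_eq_bot_iff[OF s] by (metis comp_apply)
  then have "t = foulis_br oc s \<circ> t"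
    unfolding foulis_br_def by (simp add: fun_eq_iff sasaki_eq_self)
  with t show "\<exists>r\<in>Lin oc. t = foulis_br oc s \<circ> r"
    by blast
next
  assume "\<exists>r\<in>Lin oc. t = foulis_br oc s \<circ> r"
  then have "t w \<le> oc (lstar oc s top)" for w
    unfolding foulis_br_def by (auto simp: sasaki_le)
  then show "s \<circ> t = (\<lambda>_. bot)"
    using Lin_eq_bot_iff[OF s] by (simp add: fun_eq_iff)
qed

lemma foulis_quantale_on_Lin:
  "foulis_quantale_on (Lin oc) pw_le (\<circ>) id (lstar oc) (foulis_br oc)"
  unfolding foulis_quantale_on_def
proof (intro conjI ballI)
  fix s x
  assume "s \<in> Lin oc" "x \<in> Lin oc"
  then show "is_lub pw_le (Lin oc) {} (s \<circ> x) \<longleftrightarrow> (\<exists>y\<in>Lin oc. x = foulis_br oc s \<circ> y)"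
    by (simp add: is_lub_empty_Lin_iff comp_eq_bot_iff_foulis_br)
qed (simp_all add: unital_involutive_quantale_on_Lin foulis_br_in_Lin foulis_br_idem
    lstar_foulis_br is_lub_empty_Lin_iff foulis_br_id)

end

lemma complete_oml_orthomodular: "complete_oml oc \<Longrightarrow> orthomodular oc"
  unfolding complete_oml_def orthomodular_def orthomodular_axioms_def orthocomplemented_def
  by blast

theorem mainTheorem4:
  fixes oc :: "'a::complete_lattice \<Rightarrow> 'a"
  assumes "complete_oml oc"
  shows "foulis_quantale_on (Lin oc) pw_le (\<circ>) id (lstar oc) (foulis_br oc)
         \<and> foulis_br oc id = (\<lambda>_. bot)
         \<and> (\<forall>s\<in>Lin oc. \<forall>t\<in>Lin oc.
               s \<circ> t = (\<lambda>_. bot) \<longleftrightarrow> (\<exists>r\<in>Lin oc. t = foulis_br oc s \<circ> r))"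
proof -
  interpret orthomodular oc
    using assms by (rule complete_oml_orthomodular)
  show ?thesis
    by (simp add: foulis_quantale_on_Lin foulis_br_id comp_eq_bot_iff_foulis_br)
qed

end
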